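(* Let $G=(V,E)$ be a graph and $S\subseteq V$ with $|S|=k$ such that every connected component of $G-S$ is a clique or a tree; let $\mathcal{C}$ be the set of these components, and label the components as described in the context. Let $P$ be a cycle of $G$ with $P\cap S\neq\emptyset$, let $P_1,\dots,P_l$ be its fragments in the order they appear on $P$, and for each $i$ let $v_i\in S$ be such that $P_i$ is a $v_i$–$v_{i+1}$ path (indices modulo $l$). Then there is a cycle $P'$ of $G$ that decomposes into $l$ fragments $P'_1,\dots,P'_l$ such that each $P'_i$ is a $v_i$–$v_{i+1}$ path, the internal vertices of each $P'_i$ (if any) belong to a component labeled $(v_i,v_{i+1})$, and $|P|\le|P'|$.
   Context: $G$ is a simple undirected graph. A fragment of a cycle $P$ is a subpath of $P$ whose two endpoints lie in $S$ and which contains no other vertex of $S$. For (possibly equal) $u,v\in S$ and $C\in\mathcal{C}$ define $q(C,u,v)$: (i) if $N(u)\cap C=\emptyset$ or $N(v)\cap C=\emptyset$, $q(C,u,v)=-\infty$; (ii) if $C$ is a clique and $N(u)\cap C=N(v)\cap C=\{w\}$ for a single vertex $w$, $q(C,u,v)=2$; (iii) if $C$ is a clique and neither (i) nor (ii) holds, $q(C,u,v)=|C|+1$; (iv) if $C$ is a tree and (i) does not hold, $q(C,u,v)$ equals two plus the maximum, over $w_u\in N(u)\cap C$ and $w_v\in N(v)\cap C$, of the length of the $w_u$–$w_v$ path in $C$. Labeling: for each ordered pair (possibly equal) $u,v\in S$, among the components $C\in\mathcal{C}$ with $q(C,u,v)>0$, the $k$ with largest $q(C,u,v)$ (ties broken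 arbitrarily; all of them if fewer than $k$) receive the label $(u,v)$. A component may receive several labels. *)

theory Defs
  imports Main "HOL-Library.Extended_Real"
begin

definition simple_graph :: "'a set \<Rightarrow> ('a \<Rightarrow> 'a \<Rightarrow> bool) \<Rightarrow> bool" where
  "simple_graph V E \<longleftrightarrow> finite V \<and> (\<forall>x y. E x y \<longrightarrow> x \<in> V \<and> y \<in> V)
     \<and> (\<forall>x y. E x y \<longrightarrow> E y x) \<and> (\<forall>x. \<not> E x x)"

definition nbhd :: "('a \<Rightarrow> 'a \<Rightarrow> bool) \<Rightarrow> 'a \<Rightarrow> 'a set" where
  "nbhd E u = {w. E u w}"

(* A cycle, given by its cyclic vertex sequence x_0,...,x_{m-1}; its length |P| is m. *)
definition is_cycle :: "('a \<Rightarrow> 'a \<Rightarrow> bool) \<Rightarrow> 'a list \<Rightarrow> bool" where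
  "is_cycle E xs \<longleftrightarrow> length xs \<ge> 3 \<and> distinct xs \<and>
     (\<forall>i < length xs. E (xs ! i) (xs ! ((Suc i) mod length xs)))"

definition is_path_in :: "('a \<Rightarrow> 'a \<Rightarrow> bool) \<Rightarrow> 'a set \<Rightarrow> 'a list \<Rightarrow> 'a \<Rightarrow> 'a \<Rightarrow> bool" where
  "is_path_in E C p a b \<longleftrightarrow> p \<noteq> [] \<and> hd p = a \<and> last p = b \<and> distinct p \<and> set p \<subseteq> C \<and>
     (\<forall>i. Suc i < length p \<longrightarrow> E (p ! i) (p ! Suc i))"

definition reach_in :: "('a \<Rightarrow> 'a \<Rightarrow> bool) \<Rightarrow> 'a set \<Rightarrow> 'a \<Rightarrow> 'a \<Rightarrow> bool" where
  "reach_in E W = (\<lambda>x y. E x y \<and> x \<in> W \<and> y \<in> W)\<^sup>*\<^sup>*"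

definition components :: "'a set \<Rightarrow> ('a \<Rightarrow> 'a \<Rightarrow> bool) \<Rightarrow> 'a set \<Rightarrow> 'a set set" where
  "components V E S = {{y \<in> V - S. reach_in E (V - S) x y} | x. x \<in> V - S}"

definition is_clique :: "('a \<Rightarrow> 'a \<Rightarrow> bool) \<Rightarrow> 'a set \<Rightarrow> bool" where
  "is_clique E C \<longleftrightarrow> (\<forall>x\<in>C. \<forall>y\<in>C. x \<noteq> y \<longrightarrow> E x y)"

definition is_tree :: "('a \<Rightarrow> 'a \<Rightarrow> bool) \<Rightarrow> 'a set \<Rightarrow> bool" where
  "is_tree E C \<longleftrightarrow> C \<noteq> {} \<and> (\<forall>a\<in>C. \<forall>b\<in>C. \<exists>p. is_path_in E C p a b)
     \<and> \<not> (\<exists>xs. is_cycle E xs \<and> set xs \<subseteq> C)"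

(* q(C,u,v); -\<infinity> encoded as the ereal -\<infinity>. In case (iv) the maximum over w_u, w_v of the
   length (number of edges) of the (unique) w_u--w_v path in the tree C. *)
definition qval :: "('a \<Rightarrow> 'a \<Rightarrow> bool) \<Rightarrow> 'a set \<Rightarrow> 'a \<Rightarrow> 'a \<Rightarrow> ereal" where
  "qval E C u v =
    (if nbhd E u \<inter> C = {} \<or> nbhd E v \<inter> C = {} then -\<infinity>
     else if is_clique E C then
       (if \<exists>w. nbhd E u \<inter> C = {w} \<and> nbhd E v \<inter> C = {w} then 2
        else ereal (real (card C + 1)))
     else ereal (real (2 + Max {length p - 1 | p wu wv. wu \<in> nbhd E u \<inter> C \<and> wv \<in> nbhd E v \<inter> C
                                  \<and> is_path_in E C p wu wv})))"

(* lab u v = set of components receiving the label (u,v): a valid choice of the k components with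
   largest positive q (all of them if fewer than k), ties broken arbitrarily. *)
definition valid_labeling :: "'a set \<Rightarrow> ('a \<Rightarrow> 'a \<Rightarrow> bool) \<Rightarrow> 'a set \<Rightarrow> nat \<Rightarrow> ('a \<Rightarrow> 'a \<Rightarrow> 'a set set) \<Rightarrow> bool" where
  "valid_labeling V E S k lab \<longleftrightarrow>
    (\<forall>u\<in>S. \<forall>v\<in>S.
      (let Pos = {C \<in> components V E S. qval E C u v > 0} in
        lab u v \<subseteq> Pos \<and> card (lab u v) = min k (card Pos) \<and>
        (\<forall>C\<in>lab u v. \<forall>C'\<in>Pos - lab u v. qval E C' u v \<le> qval E C u v)))"

(* The cycle xs (written starting at v_1) decomposes into fragments: frags = [(v_1,I_1),...,(v_l,I_l)],
   with xs = v_1 I_1 v_2 I_2 ... v_l I_l, v_i \<in> S, and I_i (internal vertices of the i-th fragment,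
   a v_i--v_{i+1} path, indices mod l) containing no vertex of S. *)
definition fragment_decomp :: "'a set \<Rightarrow> 'a list \<Rightarrow> ('a \<times> 'a list) list \<Rightarrow> bool" where
  "fragment_decomp S xs frags \<longleftrightarrow> frags \<noteq> [] \<and>
     xs = concat (map (\<lambda>(v, I). v # I) frags) \<and>
     (\<forall>(v, I) \<in> set frags. v \<in> S \<and> set I \<inter> S = {})"

end

theory Submission
  imports Defs
begin

(* The fragments are rerouted one at a time, keeping the interior of each fragment inside a
   single component of G - S. Suppose the interior J of the v_i--v_(i+1) fragment lies in a
   component C that did not receive the label (v_i, v_(i+1)). Then q(C) >= |J| + 1 > 0, so the
   label went to k components, all with q >= q(C). The other l - 1 < k fragments (the v_i are
   distinct vertices of S) meet at most l - 1 components, hence some labelled component D is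
   untouched by them, and D contains a v_i--v_(i+1) interior of length at least q(D) - 1 >= |J|:
   a Hamiltonian path if D is a clique, a longest admissible path if D is a tree. *)

lemma successively_append_Cons:
  "successively P (xs @ y # ys) \<longleftrightarrow> successively P (xs @ [y]) \<and> successively P (y # ys)"
  by (cases xs rule: rev_cases) (auto simp: successively_append_iff)

lemma successively_Cons_snoc_iff:
  assumes "p \<noteq> []"
  shows "successively E (u # p @ [w]) \<longleftrightarrow> E u (hd p) \<and> successively E p \<and> E (last p) w"
proof -
  have "successively E (u # p @ [w]) \<longleftrightarrow> successively E (u # p) \<and> E (last p) w"
    using successively_append_iff[of E "u # p" "[w]"] assms by simp
  moreover have "successively E (u # p) \<longleftrightarrow> E u (hd p) \<and> successively E p"
    using assms by (cases p) auto
  ultimately show ?thesis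
    by blast
qed

lemma is_cycle_iff_successively:
  "is_cycle E xs \<longleftrightarrow> 3 \<le> length xs \<and> distinct xs \<and> successively E (xs @ [hd xs])"
proof (cases xs)
  case (Cons x xs')
  have "(xs @ [hd xs]) ! Suc i = xs ! (Suc i mod length xs)" if "i < length xs" for i
    using that by (auto simp: Cons nth_append mod_if)
  then show ?thesis
    unfolding is_cycle_def successively_conv_nth by (auto simp: nth_append)
qed (simp add: is_cycle_def)

lemma distinct_concat_upt_iff:
  "distinct (concat (map f [0..<l])) \<longleftrightarrow>
     (\<forall>i<l. distinct (f i)) \<and> (\<forall>i<l. \<forall>j<l. i \<noteq> j \<longrightarrow> set (f i) \<inter> set (f j) = {})"
proof (induction l)
  case (Suc l)
  have "set (concat (map f [0..<l])) \<inter> set (f l) = {} \<longleftrightarrow> (\<forall>i<l. set (f i) \<inter> set (f l) = {})"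
    by (auto simp: atLeast0LessThan)
  moreover have "(\<forall>i<Suc l. \<forall>j<Suc l. i \<noteq> j \<longrightarrow> set (f i) \<inter> set (f j) = {}) \<longleftrightarrow>
      (\<forall>i<l. \<forall>j<l. i \<noteq> j \<longrightarrow> set (f i) \<inter> set (f j) = {}) \<and> (\<forall>i<l. set (f i) \<inter> set (f l) = {})"
    unfolding All_less_Suc by (simp add: Int_commute) blast
  ultimately show ?case
    using Suc.IH by (simp add: All_less_Suc) blast
qed simp

lemma successively_concat_upt_snoc_iff:
  "successively P (concat (map (\<lambda>i. u i # I i) [0..<Suc l]) @ [z]) \<longleftrightarrow>
     (\<forall>i<Suc l. successively P (u i # I i @ [if i < l then u (Suc i) else z]))"
proof (induction l arbitrary: z)
  case (Suc l)
  have "successively P (concat (map (\<lambda>i. u i # I i) [0..<Suc (Suc l)]) @ [z]) \<longleftrightarrow>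
        successively P (concat (map (\<lambda>i. u i # I i) [0..<Suc l]) @ [u (Suc l)]) \<and>
        successively P (u (Suc l) # I (Suc l) @ [z])"
    using successively_append_Cons[of P "concat (map (\<lambda>i. u i # I i) [0..<Suc l])" "u (Suc l)"
        "I (Suc l) @ [z]"] by simp
  moreover have "(if i < l then u (Suc i) else u (Suc l)) = u (Suc i)" if "i < Suc l" for i
    using that by (auto simp: less_Suc_eq)
  ultimately show ?case
    unfolding Suc.IH All_less_Suc[where n = "Suc l"] by (simp add: conj_commute)
qed simp

lemma is_cycle_concat_upt_iff:
  assumes "0 < l"
  shows "is_cycle E (concat (map (\<lambda>i. u i # I i) [0..<l])) \<longleftrightarrow>
    3 \<le> length (concat (map (\<lambda>i. u i # I i) [0..<l])) \<and>
    (\<forall>i<l. distinct (u i # I i)) \<and>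
    (\<forall>i<l. \<forall>j<l. i \<noteq> j \<longrightarrow> set (u i # I i) \<inter> set (u j # I j) = {}) \<and>
    (\<forall>i<l. successively E (u i # I i @ [u (Suc i mod l)]))"
proof -
  obtain m where l: "l = Suc m"
    using assms gr0_implies_Suc by blast
  have "hd (concat (map (\<lambda>i. u i # I i) [0..<l])) = u 0"
    unfolding l upt_conv_Cons[OF zero_less_Suc] by simp
  then have "successively E (concat (map (\<lambda>i. u i # I i) [0..<l]) @
        [hd (concat (map (\<lambda>i. u i # I i) [0..<l]))]) \<longleftrightarrow>
      (\<forall>i<l. successively E (u i # I i @ [if i < m then u (Suc i) else u 0]))"
    unfolding l by (simp only: successively_concat_upt_snoc_iff)
  also have "\<dots> \<longleftrightarrow> (\<forall>i<l. successively E (u i # I i @ [u (Suc i mod l)]))"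
  proof -
    have "(if i < m then u (Suc i) else u 0) = u (Suc i mod l)" if "i < l" for i
    proof (cases "i < m")
      case False
      then have "i = m"
        using that by (simp add: l)
      then show ?thesis
        by (simp add: l)
    qed (simp add: l)
    then show ?thesis
      by simp
  qed
  finally show ?thesis
    unfolding is_cycle_iff_successively distinct_concat_upt_iff by blast
qed

lemma length_concat_upt: "length (concat (map (\<lambda>i. u i # I i) [0..<l])) = (\<Sum>i<l. Suc (length (I i)))"
  by (induction l) simp_all

lemma set_subset_if_is_cycle:
  assumes "\<forall>x y. E x y \<longrightarrow> x \<in> V \<and> y \<in> V" and "is_cycle E xs"
  shows "set xs \<subseteq> V"
  using assms by (fastforce simp: is_cycle_def in_set_conv_nth)

lemma length_le_card_if_distinct:
  "finite C \<Longrightarrow> distinct p \<Longrightarrow> set p \<subseteq> C \<Longrightarrow> length p \<le> card C"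
  by (metis card_mono distinct_card)

lemma distinct_hd_eq_last_imp_length:
  assumes "distinct p" and "p \<noteq> []" and "hd p = last p"
  shows "length p = 1"
proof (cases p)
  case (Cons x p')
  have "p' = []"
  proof (rule ccontr)
    assume "p' \<noteq> []"
    then have "hd p \<in> set p'"
      using Cons assms(3) by simp
    then show False
      using Cons assms(1) by simp
  qed
  then show ?thesis
    using Cons by simp
qed (use assms in simp)

definition interior_path :: "('a \<Rightarrow> 'a \<Rightarrow> bool) \<Rightarrow> 'a set \<Rightarrow> 'a \<Rightarrow> 'a list \<Rightarrow> 'a \<Rightarrow> bool" where
  "interior_path E W u J w \<longleftrightarrow> distinct J \<and> set J \<subseteq> W \<and> successively E (u # J @ [w])"

lemma interior_path_successively: "interior_path E W u J w \<Longrightarrow> successively E J"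
  by (cases "J = []") (auto simp: interior_path_def successively_Cons_snoc_iff)

lemma is_path_in_iff_successively:
  "is_path_in E C p a b \<longleftrightarrow>
     p \<noteq> [] \<and> hd p = a \<and> last p = b \<and> distinct p \<and> set p \<subseteq> C \<and> successively E p"
  unfolding is_path_in_def successively_conv_nth by blast

lemma interior_path_imp_is_path_in:
  assumes "\<forall>x y. E x y \<longrightarrow> E y x" and "interior_path E C u J w" and "J \<noteq> []"
  shows "is_path_in E C J (hd J) (last J)" and "hd J \<in> nbhd E u \<inter> C" and "last J \<in> nbhd E w \<inter> C"
  using assms by (auto simp: interior_path_def is_path_in_iff_successively nbhd_def
      successively_Cons_snoc_iff)

lemma is_path_in_imp_interior_path:
  assumes "\<forall>x y. E x y \<longrightarrow> E y x" and "is_path_in E C p a b"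
    and "a \<in> nbhd E u" and "b \<in> nbhd E w"
  shows "interior_path E C u p w"
  using assms by (auto simp: interior_path_def is_path_in_iff_successively nbhd_def
      successively_Cons_snoc_iff)

lemma reach_in_sym:
  assumes "\<forall>x y. E x y \<longrightarrow> E y x" and "reach_in E W x y"
  shows "reach_in E W y x"
proof -
  have "symp (\<lambda>x y. E x y \<and> x \<in> W \<and> y \<in> W)"
    using assms(1) by (auto intro: sympI)
  then show ?thesis
    using assms(2) unfolding reach_in_def by (blast dest: sympD[OF symp_rtranclp])
qed

lemma component_eq_reach_class:
  assumes "\<forall>x y. E x y \<longrightarrow> E y x" and "D \<in> components V E S" and "x \<in> D"
  shows "D = {y \<in> V - S. reach_in E (V - S) x y}"
proof -
  obtain x0 where D: "D = {y \<in> V - S. reach_in E (V - S) x0 y}"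
    using assms(2) unfolding components_def by auto
  then have x0x: "reach_in E (V - S) x0 x"
    using assms(3) by blast
  moreover have "reach_in E (V - S) x x0"
    using reach_in_sym[OF assms(1) x0x] .
  ultimately have "reach_in E (V - S) x0 y \<longleftrightarrow> reach_in E (V - S) x y" for y
    unfolding reach_in_def by (meson rtranclp_trans)
  then show ?thesis
    unfolding D by blast
qed

lemma components_disjoint:
  assumes "\<forall>x y. E x y \<longrightarrow> E y x" and "D \<in> components V E S" and "D' \<in> components V E S"
    and "y \<in> D" and "y \<in> D'"
  shows "D = D'"
  using component_eq_reach_class[OF assms(1,2,4)] component_eq_reach_class[OF assms(1,3,5)] by simp

lemma component_subset: "D \<in> components V E S \<Longrightarrow> D \<subseteq> V - S"
  unfolding components_def by auto

lemma finite_components: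
  assumes "finite V"
  shows "finite (components V E S)"
proof (rule finite_subset)
  show "components V E S \<subseteq> Pow V"
    using component_subset by blast
qed (use assms in simp)

lemma reach_in_successively:
  "successively E p \<Longrightarrow> set p \<subseteq> W \<Longrightarrow> x \<in> set p \<Longrightarrow> reach_in E W (hd p) x"
proof (induction p rule: induct_list012)
  case (3 a b p)
  then have "reach_in E W b x \<or> x = a"
    by auto
  moreover have "E a b" and "a \<in> W" and "b \<in> W"
    using "3.prems"(1,2) by auto
  ultimately show ?case
    unfolding reach_in_def by (auto intro: converse_rtranclp_into_rtranclp)
qed (auto simp: reach_in_def)

lemma reach_class_mem_components:
  "x \<in> V - S \<Longrightarrow> {y \<in> V - S. reach_in E (V - S) x y} \<in> components V E S"
  unfolding components_def by blast

lemma finite_component: "finite V \<Longrightarrow> D \<in> components V E S \<Longrightarrow> finite D"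
  using component_subset by (metis finite_Diff finite_subset)

lemma walk_in_component:
  assumes "p \<noteq> []" and "successively E p" and "set p \<subseteq> V - S"
  shows "\<exists>D \<in> components V E S. set p \<subseteq> D"
proof
  show "{y \<in> V - S. reach_in E (V - S) (hd p) y} \<in> components V E S"
    by (rule reach_class_mem_components) (use hd_in_set[OF assms(1)] assms(3) in blast)
  show "set p \<subseteq> {y \<in> V - S. reach_in E (V - S) (hd p) y}"
    using assms(3) reach_in_successively[OF assms(2,3)] by auto
qed

lemma components_meeting_walk:
  assumes "\<forall>x y. E x y \<longrightarrow> E y x" and "successively E p" and "set p \<subseteq> V - S"
  shows "card {D \<in> components V E S. set p \<inter> D \<noteq> {}} \<le> 1" (is "card ?M \<le> 1")
proof (cases "p = []")
  case False
  then obtain D0 where D0: "D0 \<in> components V E S" and p: "set p \<subseteq> D0"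
    using walk_in_component assms(2,3) by blast
  have "D = D0" if D: "D \<in> ?M" for D
  proof -
    obtain y where "y \<in> set p" and "y \<in> D"
      using D by blast
    then show ?thesis
      using components_disjoint[OF assms(1) _ D0] D p by blast
  qed
  then have "card ?M \<le> card {D0}"
    by (intro card_mono) auto
  then show ?thesis
    by simp
next
  case True
  then show ?thesis
    by simp
qed

lemma successively_if_clique:
  "is_clique E C \<Longrightarrow> distinct p \<Longrightarrow> set p \<subseteq> C \<Longrightarrow> successively E p"
  by (induction p rule: induct_list012) (auto simp: is_clique_def)

lemma finite_path_lengths:
  assumes "finite C"
  shows "finite {length p - 1 | p a b. a \<in> A \<and> b \<in> B \<and> is_path_in E C p a b}"
proof (rule finite_subset)
  show "{length p - 1 | p a b. a \<in> A \<and> b \<in> B \<and> is_path_in E C p a b} \<subseteq> {..card C}"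
    using length_le_card_if_distinct[OF assms] by (force simp: is_path_in_def)
qed simp

lemma qval_ge_interior_path:
  assumes sym: "\<forall>x y. E x y \<longrightarrow> E y x" and fin: "finite C"
    and J: "interior_path E C u J w" and "J \<noteq> []"
  shows "ereal (real (length J + 1)) \<le> qval E C u w"
proof -
  note path = interior_path_imp_is_path_in[OF sym J \<open>J \<noteq> []\<close>]
  have "length J \<le> card C"
    using J fin length_le_card_if_distinct by (auto simp: interior_path_def)
  consider (single) x where "is_clique E C" "nbhd E u \<inter> C = {x}" "nbhd E w \<inter> C = {x}"
    | (clique) "is_clique E C" "\<nexists>x. nbhd E u \<inter> C = {x} \<and> nbhd E w \<inter> C = {x}"
    | (tree) "\<not> is_clique E C"
    by blast
  then show ?thesis
  proof cases
    case single
    then have "hd J = last J"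
      using path(2,3) by auto
    then have "length J = 1"
      using distinct_hd_eq_last_imp_length J \<open>J \<noteq> []\<close> unfolding interior_path_def by blast
    then show ?thesis
      using single by (auto simp: qval_def)
  next
    case clique
    then show ?thesis
      using path(2,3) \<open>length J \<le> card C\<close> by (auto simp: qval_def)
  next
    case tree
    let ?M = "{length p - 1 | p a b. a \<in> nbhd E u \<inter> C \<and> b \<in> nbhd E w \<inter> C \<and> is_path_in E C p a b}"
    have "length J - 1 \<in> ?M"
      using path by blast
    then have "length J - 1 \<le> Max ?M"
      using finite_path_lengths[OF fin] by (rule Max_ge[rotated])
    then show ?thesis
      using tree path(2,3) \<open>J \<noteq> []\<close> by (auto simp: qval_def)
  qed
qed

lemma qval_le_interior_path:
  assumes sym: "\<forall>x y. E x y \<longrightarrow> E y x" and fin: "finite C"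
    and shape: "is_clique E C \<or> is_tree E C" and pos: "0 < qval E C u w"
  shows "\<exists>J. interior_path E C u J w \<and> qval E C u w \<le> ereal (real (length J + 1))"
proof -
  have Nu: "nbhd E u \<inter> C \<noteq> {}" and Nw: "nbhd E w \<inter> C \<noteq> {}"
    using pos by (auto simp: qval_def)
  consider (single) x where "is_clique E C" "nbhd E u \<inter> C = {x}" "nbhd E w \<inter> C = {x}"
    | (clique) "is_clique E C" "\<nexists>x. nbhd E u \<inter> C = {x} \<and> nbhd E w \<inter> C = {x}"
    | (tree) "is_tree E C" "\<not> is_clique E C"
    using shape by blast
  then show ?thesis
  proof cases
    case single
    then have "interior_path E C u [x] w"
      using sym by (auto simp: interior_path_def nbhd_def)
    moreover have "qval E C u w = 2"
      using single by (auto simp: qval_def)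
    ultimately show ?thesis
      by fastforce
  next
    case clique
    obtain a b where a: "a \<in> nbhd E u \<inter> C" and b: "b \<in> nbhd E w \<inter> C" and "a \<noteq> b"
      using Nu Nw clique(2) by blast
    obtain m where m: "distinct m" "set m = C - {a, b}"
      using finite_distinct_list fin by (metis finite_Diff)
    define J where "J = a # m @ [b]"
    have "distinct J" and "set J = C"
      using m a b \<open>a \<noteq> b\<close> by (auto simp: J_def)
    then have "is_path_in E C J a b"
      using successively_if_clique[OF clique(1)] by (simp add: is_path_in_iff_successively J_def)
    then have "interior_path E C u J w"
      using is_path_in_imp_interior_path[OF sym] a b by blast
    moreover have "length J = card C"
      using \<open>distinct J\<close> \<open>set J = C\<close> distinct_card by fastforce
    ultimately show ?thesis
      using clique Nu Nw by (auto simp: qval_def)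
  next
    case tree
    let ?M = "{length p - 1 | p a b. a \<in> nbhd E u \<inter> C \<and> b \<in> nbhd E w \<inter> C \<and> is_path_in E C p a b}"
    obtain a b where "a \<in> nbhd E u \<inter> C" and "b \<in> nbhd E w \<inter> C"
      using Nu Nw by blast
    moreover obtain p0 where "is_path_in E C p0 a b"
      using tree(1) calculation unfolding is_tree_def by blast
    ultimately have "?M \<noteq> {}"
      by blast
    then have "Max ?M \<in> ?M"
      using finite_path_lengths[OF fin] by (rule Max_in[rotated])
    then obtain p a' b' where p: "Max ?M = length p - 1" "is_path_in E C p a' b'"
      and "a' \<in> nbhd E u \<inter> C" and "b' \<in> nbhd E w \<inter> C"
      by blast
    then have "interior_path E C u p w"
      using is_path_in_imp_interior_path[OF sym] by blast
    moreover have "p \<noteq> []"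
      using p(2) by (simp add: is_path_in_def)
    ultimately show ?thesis
      using tree(2) p(1) Nu Nw by (auto simp: qval_def)
  qed
qed

lemma card_lab_eq_if_unlabeled:
  assumes fin: "finite V" and lab: "valid_labeling V E S k lab" and "u \<in> S" and "w \<in> S"
    and C: "C \<in> components V E S" "0 < qval E C u w" "C \<notin> lab u w"
  shows "card (lab u w) = k"
proof -
  let ?Pos = "{C \<in> components V E S. 0 < qval E C u w}"
  have "lab u w \<subseteq> ?Pos" and card: "card (lab u w) = min k (card ?Pos)"
    using lab \<open>u \<in> S\<close> \<open>w \<in> S\<close> unfolding valid_labeling_def Let_def by blast+
  then have "lab u w \<subset> ?Pos"
    using C by blast
  then have "card (lab u w) < card ?Pos"
    using finite_components[OF fin] by (intro psubset_card_mono) auto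
  then show ?thesis
    using card by linarith
qed

lemma labeled_reroute:
  assumes sym: "\<forall>x y. E x y \<longrightarrow> E y x" and fin: "finite V"
    and comps: "\<forall>C \<in> components V E S. is_clique E C \<or> is_tree E C"
    and lab: "valid_labeling V E S k lab" and "u \<in> S" and "w \<in> S"
    and C: "C \<in> components V E S" "C \<notin> lab u w"
    and J: "interior_path E C u J w" "J \<noteq> []"
    and F: "F \<subseteq> components V E S" "card F < k"
  shows "\<exists>D \<in> lab u w. D \<notin> F \<and> (\<exists>J'. interior_path E D u J' w \<and> length J \<le> length J')"
proof -
  have qC: "ereal (real (length J + 1)) \<le> qval E C u w"
    using qval_ge_interior_path[OF sym finite_component[OF fin C(1)] J] .
  then have "0 < qval E C u w"
    by (rule less_le_trans[rotated]) simp
  then have "card (lab u w) = k"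
    using card_lab_eq_if_unlabeled[OF fin lab \<open>u \<in> S\<close> \<open>w \<in> S\<close> C(1)] C(2) by blast
  moreover have "finite F"
    using F(1) finite_components[OF fin] by (rule finite_subset)
  ultimately have "\<not> lab u w \<subseteq> F"
    using card_mono[of F "lab u w"] F(2) by auto
  then obtain D where D: "D \<in> lab u w" "D \<notin> F"
    by blast
  let ?Pos = "{C \<in> components V E S. 0 < qval E C u w}"
  have "D \<in> ?Pos" and "qval E C u w \<le> qval E D u w"
    using lab \<open>u \<in> S\<close> \<open>w \<in> S\<close> D(1) C \<open>0 < qval E C u w\<close>
    unfolding valid_labeling_def Let_def by blast+
  then have "D \<in> components V E S" and "0 < qval E D u w" and qD: "qval E C u w \<le> qval E D u w"
    by auto
  moreover have "finite D"
    using finite_component[OF fin \<open>D \<in> components V E S\<close>] .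
  ultimately obtain J' where J': "interior_path E D u J' w" "qval E D u w \<le> ereal (real (length J' + 1))"
    using qval_le_interior_path[OF sym] comps by blast
  have "ereal (real (length J + 1)) \<le> ereal (real (length J' + 1))"
    using qC qD J'(2) by (meson order_trans)
  then have "length J \<le> length J'"
    by simp
  then show ?thesis
    using D J'(1) by blast
qed

definition disjoint_routing ::
    "('a \<Rightarrow> 'a \<Rightarrow> bool) \<Rightarrow> 'a set \<Rightarrow> nat \<Rightarrow> (nat \<Rightarrow> 'a) \<Rightarrow> (nat \<Rightarrow> 'a) \<Rightarrow> (nat \<Rightarrow> 'a list) \<Rightarrow> bool" where
  "disjoint_routing E W l u w J \<longleftrightarrow>
     (\<forall>i<l. interior_path E W (u i) (J i) (w i)) \<and>
     (\<forall>i<l. \<forall>j<l. i \<noteq> j \<longrightarrow> set (J i) \<inter> set (J j) = {})"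

lemma disjoint_routing_update:
  assumes "disjoint_routing E W l u w J" and "interior_path E W (u n) J' (w n)"
    and "\<forall>j<l. j \<noteq> n \<longrightarrow> set (J j) \<inter> set J' = {}"
  shows "disjoint_routing E W l u w (J(n := J'))"
  unfolding disjoint_routing_def
proof (intro conjI allI impI)
  fix i
  assume "i < l"
  then show "interior_path E W (u i) ((J(n := J')) i) (w i)"
    using assms(1,2) unfolding disjoint_routing_def by (cases "i = n") auto
next
  fix i j
  assume "i < l" and "j < l" and "i \<noteq> j"
  then show "set ((J(n := J')) i) \<inter> set ((J(n := J')) j) = {}"
    using assms(1,3) unfolding disjoint_routing_def
    by (cases "i = n"; cases "j = n") (simp_all add: Int_commute)
qed

lemma card_components_met_by_routing:
  assumes sym: "\<forall>x y. E x y \<longrightarrow> E y x" and J: "disjoint_routing E (V - S) l u w J"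
    and A: "A \<subseteq> {..<l}"
  shows "card {D \<in> components V E S. \<exists>j\<in>A. set (J j) \<inter> D \<noteq> {}} \<le> card A"
proof -
  have "{D \<in> components V E S. \<exists>j\<in>A. set (J j) \<inter> D \<noteq> {}} =
      (\<Union>j\<in>A. {D \<in> components V E S. set (J j) \<inter> D \<noteq> {}})"
    by blast
  also have "card \<dots> \<le> (\<Sum>j\<in>A. card {D \<in> components V E S. set (J j) \<inter> D \<noteq> {}})"
    using A finite_subset by (intro card_UN_le) blast
  also have "\<dots> \<le> (\<Sum>j\<in>A. 1)"
  proof (rule sum_mono)
    fix j
    assume "j \<in> A"
    then have path: "interior_path E (V - S) (u j) (J j) (w j)"
      using J A unfolding disjoint_routing_def by blast
    show "card {D \<in> components V E S. set (J j) \<inter> D \<noteq> {}} \<le> 1"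
    proof (rule components_meeting_walk[OF sym])
      show "successively E (J j)"
        using path by (rule interior_path_successively)
      show "set (J j) \<subseteq> V - S"
        using path by (simp add: interior_path_def)
    qed
  qed
  finally show ?thesis
    by simp
qed

lemma fragment_decomp_map_iff:
  "fragment_decomp S xs (map (\<lambda>i. (u i, I i)) [0..<l]) \<longleftrightarrow>
     0 < l \<and> xs = concat (map (\<lambda>i. u i # I i) [0..<l]) \<and> (\<forall>i<l. u i \<in> S \<and> set (I i) \<inter> S = {})"
  by (auto simp: fragment_decomp_def comp_def)

lemma disjoint_routing_if_fragment_decomp:
  assumes G: "simple_graph V E" and cycle: "is_cycle E xs"
    and frag: "fragment_decomp S xs (map (\<lambda>i. (u i, I i)) [0..<l])"
  shows "disjoint_routing E (V - S) l u (\<lambda>i. u (Suc i mod l)) I" and "inj_on u {..<l}"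
proof -
  have "0 < l" and xs: "xs = concat (map (\<lambda>i. u i # I i) [0..<l])"
    and IS: "\<forall>i<l. set (I i) \<inter> S = {}"
    using frag unfolding fragment_decomp_map_iff by blast+
  have distinct: "\<forall>i<l. distinct (u i # I i)"
    and disjoint: "\<forall>i<l. \<forall>j<l. i \<noteq> j \<longrightarrow> set (u i # I i) \<inter> set (u j # I j) = {}"
    and succ: "\<forall>i<l. successively E (u i # I i @ [u (Suc i mod l)])"
    using cycle unfolding xs is_cycle_concat_upt_iff[OF \<open>0 < l\<close>] by blast+
  have "\<forall>i<l. set (I i) \<subseteq> V - S"
    using set_subset_if_is_cycle[of E V xs] G cycle IS unfolding simple_graph_def xs
    by (auto simp: atLeast0LessThan)
  then show "disjoint_routing E (V - S) l u (\<lambda>i. u (Suc i mod l)) I"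
    unfolding disjoint_routing_def interior_path_def
    using distinct disjoint succ by auto
  show "inj_on u {..<l}"
    using disjoint by (intro inj_onI) fastforce
qed

lemma fragment_decomp_if_disjoint_routing:
  assumes "0 < l" and inj: "inj_on u {..<l}" and uS: "\<forall>i<l. u i \<in> S"
    and routing: "disjoint_routing E (V - S) l u (\<lambda>i. u (Suc i mod l)) J"
    and "3 \<le> length (concat (map (\<lambda>i. u i # J i) [0..<l]))"
  shows "is_cycle E (concat (map (\<lambda>i. u i # J i) [0..<l]))"
    and "fragment_decomp S (concat (map (\<lambda>i. u i # J i) [0..<l])) (map (\<lambda>i. (u i, J i)) [0..<l])"
proof -
  have path: "interior_path E (V - S) (u i) (J i) (u (Suc i mod l))" if "i < l" for i
    using routing that unfolding disjoint_routing_def by blast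
  show "is_cycle E (concat (map (\<lambda>i. u i # J i) [0..<l]))"
    unfolding is_cycle_concat_upt_iff[OF \<open>0 < l\<close>]
  proof (intro conjI allI impI)
    fix i
    assume "i < l"
    then show "distinct (u i # J i)" and "successively E (u i # J i @ [u (Suc i mod l)])"
      using path uS by (auto simp: interior_path_def)
    fix j
    assume "j < l" and "i \<noteq> j"
    then have "u i \<noteq> u j"
      using inj \<open>i < l\<close> by (auto dest: inj_onD)
    moreover have "set (J i) \<inter> set (J j) = {}"
      using routing \<open>i < l\<close> \<open>j < l\<close> \<open>i \<noteq> j\<close> unfolding disjoint_routing_def by blast
    moreover have "u i \<notin> set (J j)" and "u j \<notin> set (J i)"
      using path[OF \<open>i < l\<close>] path[OF \<open>j < l\<close>] uS \<open>i < l\<close> \<open>j < l\<close> by (auto simp: interior_path_def)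
    ultimately show "set (u i # J i) \<inter> set (u j # J j) = {}"
      by auto
  qed (use assms(5) in simp)
  show "fragment_decomp S (concat (map (\<lambda>i. u i # J i) [0..<l])) (map (\<lambda>i. (u i, J i)) [0..<l])"
    using \<open>0 < l\<close> uS path unfolding fragment_decomp_map_iff interior_path_def by auto
qed

lemma labeled_routing_exists:
  assumes sym: "\<forall>x y. E x y \<longrightarrow> E y x" and fin: "finite V"
    and comps: "\<forall>C \<in> components V E S. is_clique E C \<or> is_tree E C"
    and lab: "valid_labeling V E S k lab" and "l \<le> k"
    and uw: "\<forall>i<l. u i \<in> S \<and> w i \<in> S" and I: "disjoint_routing E (V - S) l u w I"
  shows "\<exists>J. disjoint_routing E (V - S) l u w J \<and> (\<forall>i<l. length (I i) \<le> length (J i)) \<and>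
           (\<forall>i<l. J i \<noteq> [] \<longrightarrow> (\<exists>C \<in> lab (u i) (w i). set (J i) \<subseteq> C))"
proof -
  have "\<exists>J. disjoint_routing E (V - S) l u w J \<and> (\<forall>i<l. length (I i) \<le> length (J i)) \<and>
           (\<forall>i<n. J i \<noteq> [] \<longrightarrow> (\<exists>C \<in> lab (u i) (w i). set (J i) \<subseteq> C))" if "n \<le> l" for n
    using that
  proof (induction n)
    case 0
    then show ?case
      using I by blast
  next
    case (Suc n)
    then have "n < l"
      by simp
    from Suc obtain J where J: "disjoint_routing E (V - S) l u w J"
      and len: "\<forall>i<l. length (I i) \<le> length (J i)"
      and labeled: "\<forall>i<n. J i \<noteq> [] \<longrightarrow> (\<exists>C \<in> lab (u i) (w i). set (J i) \<subseteq> C)"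
      by auto
    show ?case
    proof (cases "J n \<noteq> [] \<and> \<not> (\<exists>C \<in> lab (u n) (w n). set (J n) \<subseteq> C)")
      case False
      then have "\<forall>i<Suc n. J i \<noteq> [] \<longrightarrow> (\<exists>C \<in> lab (u i) (w i). set (J i) \<subseteq> C)"
        using labeled by (auto simp: less_Suc_eq)
      then show ?thesis
        using J len by blast
    next
      case True
      have path: "interior_path E (V - S) (u n) (J n) (w n)"
        using J \<open>n < l\<close> unfolding disjoint_routing_def by blast
      have "successively E (J n)"
        using path by (rule interior_path_successively)
      moreover have "set (J n) \<subseteq> V - S"
        using path by (simp add: interior_path_def)
      ultimately obtain C where C: "C \<in> components V E S" "set (J n) \<subseteq> C"
        using walk_in_component True by meson
      have "C \<notin> lab (u n) (w n)"
        using True C(2) by blast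
      let ?F = "{D \<in> components V E S. \<exists>j\<in>{..<l} - {n}. set (J j) \<inter> D \<noteq> {}}"
      have "card ?F \<le> card ({..<l} - {n})"
        by (rule card_components_met_by_routing[OF sym J]) auto
      then have "card ?F < k"
        using \<open>n < l\<close> \<open>l \<le> k\<close> by simp
      moreover have "interior_path E C (u n) (J n) (w n)"
        using path C(2) by (simp add: interior_path_def)
      moreover have "u n \<in> S" and "w n \<in> S"
        using uw \<open>n < l\<close> by auto
      moreover have "?F \<subseteq> components V E S"
        by blast
      ultimately obtain D J' where D: "D \<in> lab (u n) (w n)" "D \<notin> ?F"
        and J': "interior_path E D (u n) J' (w n)" "length (J n) \<le> length J'"
        using labeled_reroute[OF sym fin comps lab _ _ C(1) \<open>C \<notin> lab (u n) (w n)\<close>] True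
        by (metis (lifting))
      have "D \<in> components V E S"
        using lab \<open>u n \<in> S\<close> \<open>w n \<in> S\<close> D(1) unfolding valid_labeling_def Let_def by blast
      then have "interior_path E (V - S) (u n) J' (w n)"
        using J'(1) component_subset by (fastforce simp: interior_path_def)
      moreover have "\<forall>j<l. j \<noteq> n \<longrightarrow> set (J j) \<inter> set J' = {}"
        using D(2) \<open>D \<in> components V E S\<close> J'(1) by (auto simp: interior_path_def)
      ultimately have "disjoint_routing E (V - S) l u w (J(n := J'))"
        by (rule disjoint_routing_update[OF J])
      moreover have "\<forall>i<l. length (I i) \<le> length ((J(n := J')) i)"
        using len J'(2) \<open>n < l\<close> by (auto intro: le_trans)
      moreover have "\<forall>i<Suc n. (J(n := J')) i \<noteq> [] \<longrightarrow> (\<exists>C \<in> lab (u i) (w i). set ((J(n := J')) i) \<subseteq> C)"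
        using labeled D(1) J'(1) by (auto simp: less_Suc_eq interior_path_def)
      ultimately show ?thesis
        by blast
    qed
  qed
  then show ?thesis
    by blast
qed

theorem mainTheorem18:
  fixes V :: "'a set" and E :: "'a \<Rightarrow> 'a \<Rightarrow> bool" and S :: "'a set" and k :: nat
    and lab :: "'a \<Rightarrow> 'a \<Rightarrow> 'a set set"
    and xs :: "'a list" and frags :: "('a \<times> 'a list) list"
  assumes G: "simple_graph V E"
    and SV: "S \<subseteq> V" and card_S: "card S = k"
    and comps: "\<forall>C \<in> components V E S. is_clique E C \<or> is_tree E C"
    and lab: "valid_labeling V E S k lab"
    and P: "is_cycle E xs"
    and frag: "fragment_decomp S xs frags"
  shows "\<exists>ys frags'. is_cycle E ys \<and> fragment_decomp S ys frags' \<and>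
           length frags' = length frags \<and>
           (\<forall>i < length frags. fst (frags' ! i) = fst (frags ! i)) \<and>
           (\<forall>i < length frags. snd (frags' ! i) \<noteq> [] \<longrightarrow>
              (\<exists>C \<in> lab (fst (frags ! i)) (fst (frags ! ((Suc i) mod length frags))).
                  set (snd (frags' ! i)) \<subseteq> C)) \<and>
           length xs \<le> length ys"
proof -
  have sym: "\<forall>x y. E x y \<longrightarrow> E y x" and finV: "finite V"
    using G unfolding simple_graph_def by blast+
  define l where "l = length frags"
  define u where "u i = fst (frags ! i)" for i
  define I where "I i = snd (frags ! i)" for i
  have frag': "fragment_decomp S xs (map (\<lambda>i. (u i, I i)) [0..<l])"
    using frag by (simp add: l_def u_def I_def map_nth)
  then have "0 < l" and xs: "xs = concat (map (\<lambda>i. u i # I i) [0..<l])" and uS: "\<forall>i<l. u i \<in> S"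
    unfolding fragment_decomp_map_iff by blast+
  note routing = disjoint_routing_if_fragment_decomp[OF G P frag']
  have "l \<le> k"
    using card_inj_on_le[OF routing(2), of S] uS finite_subset[OF SV finV] card_S by auto
  obtain J where J: "disjoint_routing E (V - S) l u (\<lambda>i. u (Suc i mod l)) J"
    and len: "\<forall>i<l. length (I i) \<le> length (J i)"
    and labeled: "\<forall>i<l. J i \<noteq> [] \<longrightarrow> (\<exists>C \<in> lab (u i) (u (Suc i mod l)). set (J i) \<subseteq> C)"
    using labeled_routing_exists[OF sym finV comps lab \<open>l \<le> k\<close> _ routing(1)] uS by auto
  define ys where "ys = concat (map (\<lambda>i. u i # J i) [0..<l])"
  have "length xs \<le> length ys"
    unfolding xs ys_def length_concat_upt using len by (intro sum_mono) simp
  moreover have "3 \<le> length ys"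
    using P calculation by (simp add: is_cycle_def)
  note ys = fragment_decomp_if_disjoint_routing[OF \<open>0 < l\<close> routing(2) uS J this[unfolded ys_def]]
  show ?thesis
    using ys labeled \<open>length xs \<le> length ys\<close> unfolding ys_def[symmetric]
    by (intro exI[of _ ys] exI[of _ "map (\<lambda>i. (u i, J i)) [0..<l]"]) (simp add: l_def u_def)
qed

end
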